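(* Let $d=p$ be a prime with $p\equiv 3 \bmod 4$, and let $X$ be the cyclic shift operator $X|r\rangle=|r+1\rangle$ (indices modulo $d$). Let $|\mathbf v\rangle=(\sqrt{x_0},v_1,\dots,v_{d-1})^{\rm T}$ be a vector with $x_0=-2-\sqrt{d+1}$ (so $\sqrt{x_0}$ is purely imaginary), $|v_j|^2=1$, $v_{-j}=-v_j^*$, and of Legendre form: for $j\neq 0$, $v_j=x_1$ if $j$ is a quadratic residue modulo $p$ and $v_j=-1/x_1$ otherwise (so $x_1$ is a phase factor, $x_1^*=1/x_1$). Write $\left(\frac{j}{d}\right)$ for the Legendre symbol. If $\left(\frac{j}{d}\right)=1$ and $d\equiv 3\bmod 8$, then $$\langle \mathbf v|X^{-2j}|\mathbf v\rangle=\sum_{k=0}^{d-1}v_k^*v_{k+2j}=\frac{d-3}{2}-\frac{d-3}{4}\frac{1}{x_1^2}-\frac{d+1}{4}x_1^2+\frac{2\sqrt{x_0}}{x_1}.$$ If $\left(\frac{j}{d}\right)=1$ and $d\equiv 7\bmod 8$, then $$\langle \mathbf v|X^{-2j}|\mathbf v\rangle=\frac{d-3}{2}-\frac{d+1}{4}\frac{1}{x_1^2}-\frac{d-3}{4}x_1^2-2\sqrt{x_0}\,x_1.$$ If $\left(\frac{j}{d}\right)=-1$, the corresponding formulas are obtained by substituting $x_1\mapsto -1/x_1$ in these equations.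
   Context: Here $d=p\equiv 3\bmod 4$ prime, $X$ is the Weyl–Heisenberg shift $X|r\rangle=|r+1\rangle$ on $\mathbb C^d$ with basis indexed by integers mod $d$, and $|\mathbf v\rangle$ is an (unnormalized) almost flat "Legendre vector": first component $\sqrt{x_0}$ with $x_0=-2-\sqrt{d+1}$, remaining components of modulus one satisfying $v_{-j}=-v_j^*$, equal to a phase $x_1$ on quadratic residues and $-1/x_1$ on non-residues (consistent since $-1$ is a non-residue when $p\equiv 3\bmod 4$). *)

theory Defs
  imports Complex_Main "HOL-Number_Theory.Number_Theory"
begin

text \<open>Right-hand side of the overlap formula for d = 3 mod 8, as a function of
  the dimension d, the value s = sqrt(x0), and the phase y (= x1).\<close>
definition rhs3 :: "nat \<Rightarrow> complex \<Rightarrow> complex \<Rightarrow> complex" where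
  "rhs3 d s y = (of_nat d - 3) / 2 - (of_nat d - 3) / 4 * (1 / y^2)
                 - (of_nat d + 1) / 4 * y^2 + 2 * s / y"

definition rhs7 :: "nat \<Rightarrow> complex \<Rightarrow> complex \<Rightarrow> complex" where
  "rhs7 d s y = (of_nat d - 3) / 2 - (of_nat d + 1) / 4 * (1 / y^2)
                 - (of_nat d - 3) / 4 * y^2 - 2 * s * y"

end

theory Submission
  imports Defs
begin

(* Away from 0 the Legendre vector is affine in the Legendre symbol: v_k = \<alpha> + \<beta> (k/p) with
   \<alpha> = (x1 - 1/x1)/2, \<beta> = (x1 + 1/x1)/2, and since x1 is a phase, cnj v_k = -\<alpha> + \<beta> (k/p),
   while cnj v_0 = -v_0. The overlap is therefore governed by the character sums
   \<Sum> (k/p) = 0 and \<Sum> (k/p)((k+t)/p) = -1 for p not dividing t, corrected at the two indices k = 0 and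
   k = -t where v_0 enters; this gives -p \<alpha>\<^sup>2 - \<beta>\<^sup>2 + 2 (\<alpha> - v_0)(\<alpha> + \<beta> (2j/p)).
   Finally (2j/p) = (2/p)(j/p), where (2/p) = -1 exactly for p = 3 mod 8, and replacing x1 by -1/x1 fixes \<alpha>
   and negates \<beta>. *)

lemma prime_mod_4_eq_3_gt_2: "prime p \<Longrightarrow> p mod 4 = 3 \<Longrightarrow> 2 < (p::nat)"
  using prime_gt_1_nat[of p] by presburger

lemma Legendre_mod: "Legendre (a mod m) m = Legendre a m"
  by (simp add: Legendre_def QuadRes_def cong_def)

lemma Legendre_eq_0_iff: "Legendre a m = 0 \<longleftrightarrow> m dvd a"
  by (simp add: Legendre_def cong_0_iff)

lemma Legendre_cases: "Legendre a m \<in> {-1, 0, 1}"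
  by (simp add: Legendre_def)

lemma Legendre_square:
  assumes "\<not> m dvd a"
  shows "Legendre a m * Legendre a m = 1"
  using Legendre_cases[of a m] Legendre_eq_0_iff[of a m] assms by auto

lemma Legendre_eq_if_cong:
  assumes "2 < p" "[Legendre a p = b] (mod p)" "b \<in> {-1, 0, 1}"
  shows "Legendre a p = b"
proof -
  have "Legendre a p + 1 = b + 1"
    using Legendre_cases[of a p] assms
    by (intro cong_less_imp_eq_int) (auto intro: cong_add)
  then show ?thesis by simp
qed

lemma Legendre_mult:
  assumes "prime p" "2 < p"
  shows "Legendre (a * b) (int p) = Legendre a (int p) * Legendre b (int p)"
proof (rule Legendre_eq_if_cong)
  have "[Legendre (a * b) (int p) = a ^ ((p - 1) div 2) * b ^ ((p - 1) div 2)] (mod int p)"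
    using euler_criterion[OF assms, of "a * b"] by (simp add: power_mult_distrib)
  moreover have "[Legendre a (int p) * Legendre b (int p) = a ^ ((p - 1) div 2) * b ^ ((p - 1) div 2)] (mod int p)"
    using assms by (intro cong_mult euler_criterion)
  ultimately show "[Legendre (a * b) (int p) = Legendre a (int p) * Legendre b (int p)] (mod int p)"
    by (metis cong_sym cong_trans)
  show "Legendre a (int p) * Legendre b (int p) \<in> {-1, 0, 1}"
    using Legendre_cases[of a "int p"] Legendre_cases[of b "int p"] by auto
qed (use assms in simp)

lemma Legendre_minus_one:
  assumes "prime p" "2 < p"
  shows "Legendre (-1) (int p) = (-1) ^ ((p - 1) div 2)"
  using assms euler_criterion[OF assms, of "-1"]
  by (intro Legendre_eq_if_cong) (auto simp: minus_one_power_iff)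

lemma Legendre_minus_one_mod_4_eq_3:
  assumes "prime p" "p mod 4 = 3"
  shows "Legendre (-1) (int p) = -1"
proof -
  have "odd ((p - 1) div 2)" using assms(2) by presburger
  then show ?thesis
    using Legendre_minus_one[OF assms(1) prime_mod_4_eq_3_gt_2[OF assms]] by simp
qed

lemma Legendre_two:
  assumes "prime p" "2 < p"
  shows "Legendre 2 (int p) = (if p mod 8 = 1 \<or> p mod 8 = 7 then 1 else -1)"
proof -
  have "\<not> [2 = 0] (mod int p)"
    using assms zdvd_imp_le[of "int p" 2] by (auto simp: cong_0_iff)
  then interpret G: GAUSS p 2 using assms by unfold_locales auto
  define h where "h = (int p - 1) div 2"
  have "G.C = (\<lambda>x. 2 * x) ` {0<..h}"
    unfolding G.C_def G.B_def G.A_def h_def image_image by (intro image_cong) auto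
  then have "G.E = (\<lambda>x. 2 * x) ` {h div 2<..h}"
    unfolding G.E_def h_def by auto
  then have "card G.E = nat (h - h div 2)"
    by (simp add: card_image inj_on_def)
  also have "\<dots> = (p + 1) div 4"
    unfolding h_def by linarith
  finally have "card G.E = (p + 1) div 4" .
  moreover have "odd p" using assms by (simp add: prime_odd_nat)
  ultimately have "even (card G.E) \<longleftrightarrow> p mod 8 = 1 \<or> p mod 8 = 7"
    by presburger
  then show ?thesis using G.gauss_lemma by (simp add: minus_one_power_iff)
qed

lemma sum_periodic_affine_reindex:
  fixes f :: "int \<Rightarrow> 'a::comm_monoid_add"
  assumes periodic: "\<And>a. f (a mod m) = f a" and "coprime c m"
  shows "(\<Sum>k\<in>{0..<m}. f (c * k + b)) = (\<Sum>k\<in>{0..<m}. f k)"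
proof -
  let ?g = "\<lambda>k. (c * k + b) mod m"
  have "inj_on ?g {0..<m}"
  proof (rule inj_onI)
    fix k l assume "k \<in> {0..<m}" "l \<in> {0..<m}" "?g k = ?g l"
    then have "m dvd c * (k - l)"
      by (metis mod_eq_dvd_iff add_diff_cancel_right right_diff_distrib)
    with \<open>coprime c m\<close> have "k mod m = l mod m"
      by (simp add: coprime_commute coprime_dvd_mult_right_iff mod_eq_dvd_iff)
    with \<open>k \<in> {0..<m}\<close> \<open>l \<in> {0..<m}\<close> show "k = l" by simp
  qed
  moreover have "?g ` {0..<m} \<subseteq> {0..<m}"
    by (cases "0 < m") auto
  ultimately have "bij_betw ?g {0..<m} {0..<m}"
    by (simp add: bij_betw_def endo_inj_surj)
  then have "(\<Sum>k\<in>{0..<m}. f (?g k)) = (\<Sum>k\<in>{0..<m}. f k)"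
    by (rule sum.reindex_bij_betw)
  then show ?thesis by (simp add: periodic)
qed

lemma sum_Legendre_eq_0:
  assumes "prime p" "p mod 4 = 3"
  shows "(\<Sum>k\<in>{0..<int p}. Legendre k (int p)) = 0"
proof -
  have "(\<Sum>k\<in>{0..<int p}. Legendre k (int p)) = (\<Sum>k\<in>{0..<int p}. Legendre (-1 * k + 0) (int p))"
    by (rule sym, rule sum_periodic_affine_reindex) (simp_all add: Legendre_mod)
  also have "\<dots> = - (\<Sum>k\<in>{0..<int p}. Legendre k (int p))"
    using Legendre_mult[OF assms(1) prime_mod_4_eq_3_gt_2[OF assms], of "-1"]
      Legendre_minus_one_mod_4_eq_3[OF assms] by (simp add: sum_negf)
  finally show ?thesis by simp
qed

lemma sum_Legendre_shifted_eq_0: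
  assumes "prime p" "p mod 4 = 3"
  shows "(\<Sum>k\<in>{0..<int p}. Legendre (k + t) (int p)) = 0"
  using sum_periodic_affine_reindex[of "\<lambda>k. Legendre k (int p)" "int p" 1 t]
    sum_Legendre_eq_0[OF assms] by (simp add: Legendre_mod add.commute)

lemma sum_Legendre_autocorrelation:
  assumes "prime p" "p mod 4 = 3" "\<not> int p dvd t"
  shows "(\<Sum>k\<in>{0..<int p}. Legendre k (int p) * Legendre (k + t) (int p)) = -1"
proof -
  have "2 < p" using assms prime_mod_4_eq_3_gt_2 by blast
  define L where "L a = Legendre a (int p)" for a
  define g where "g a = (\<Sum>k\<in>{0..<int p}. L k * L (k + a))" for a
  \<comment> \<open>g is constant on the units (substitute k by a k), g 0 = p - 1, and \<open>\<Sum>a. g a = 0\<close>.\<close>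
  have L_mod: "L (a mod int p) = L a" for a
    unfolding L_def by (rule Legendre_mod)
  have g_unit: "g a = g 1" if "\<not> int p dvd a" for a
  proof -
    have "coprime a (int p)"
      using that assms(1) prime_imp_coprime[of "int p" a] by (simp add: coprime_commute)
    then have "g a = (\<Sum>k\<in>{0..<int p}. L (a * k + 0) * L (a * k + 0 + a))"
      unfolding g_def
      by (intro sym[OF sum_periodic_affine_reindex]) (metis L_mod mod_add_left_eq)
    also have "\<dots> = (\<Sum>k\<in>{0..<int p}. (L a * L a) * (L k * L (k + 1)))"
    proof (intro sum.cong refl)
      fix k
      have "L (a * k + 0 + a) = L (a * (k + 1))" by (simp add: algebra_simps)
      then show "L (a * k + 0) * L (a * k + 0 + a) = (L a * L a) * (L k * L (k + 1))"
        using Legendre_mult[OF assms(1) \<open>2 < p\<close>, of a] by (simp only: L_def) simp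
    qed
    also have "\<dots> = g 1"
      using Legendre_square[OF that] by (simp add: g_def L_def)
    finally show ?thesis .
  qed
  have "g 0 = (\<Sum>k\<in>{0..<int p}. 1 - (if k = 0 then 1 else 0))"
    unfolding g_def
  proof (intro sum.cong refl)
    fix k assume "k \<in> {0..<int p}"
    then have "k = 0 \<longleftrightarrow> int p dvd k"
      using zdvd_imp_le[of "int p" k] by fastforce
    then show "L k * L (k + 0) = 1 - (if k = 0 then 1 else 0)"
      using Legendre_square[of "int p" k] by (simp add: L_def Legendre_eq_0_iff)
  qed
  also have "\<dots> = int p - 1"
    using \<open>2 < p\<close> by (simp add: sum_subtractf)
  finally have g_0: "g 0 = int p - 1" .
  have "(\<Sum>a\<in>{0..<int p}. g a) = (\<Sum>k\<in>{0..<int p}. L k * (\<Sum>a\<in>{0..<int p}. L (a + k)))"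
    unfolding g_def by (subst sum.swap) (simp add: sum_distrib_left add.commute)
  also have "\<dots> = 0"
    using sum_Legendre_shifted_eq_0[OF assms(1,2)] by (simp add: L_def)
  finally have "(\<Sum>a\<in>{0..<int p}. g a) = 0" .
  moreover have "(\<Sum>a\<in>{0..<int p}. g a) = g 0 + (\<Sum>a\<in>{0..<int p} - {0}. g a)"
    using \<open>2 < p\<close> by (subst sum.remove[of _ 0]) auto
  moreover have "(\<Sum>a\<in>{0..<int p} - {0}. g a) = (\<Sum>a\<in>{0..<int p} - {0}. g 1)"
    by (intro sum.cong refl g_unit) (auto dest: zdvd_imp_le)
  ultimately have "(int p - 1) * (g 1 + 1) = 0"
    using g_0 \<open>2 < p\<close> by (simp add: algebra_simps)
  then have "g 1 = -1" using \<open>2 < p\<close> by simp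
  then show ?thesis using g_unit[OF assms(3)] by (simp add: g_def L_def)
qed

definition legendre_vector :: "nat \<Rightarrow> 'a::comm_ring_1 \<Rightarrow> 'a \<Rightarrow> 'a \<Rightarrow> int \<Rightarrow> 'a" where
  "legendre_vector p z a b k = (if int p dvd k then z else a + b * of_int (Legendre k (int p)))"

lemma sum_legendre_vector_correlation:
  fixes r c d z a b :: "'a::comm_ring_1"
  assumes "prime p" "p mod 4 = 3" "\<not> int p dvd t"
  defines "\<chi> \<equiv> of_int (Legendre t (int p)) :: 'a"
  shows "(\<Sum>k\<in>{0..<int p}. legendre_vector p r c d k * legendre_vector p z a b (k + t)) =
    of_nat p * c * a - d * b + (r - c) * (a + b * \<chi>) + (z - a) * (c - d * \<chi>)"
proof -
  have "2 < p" using assms prime_mod_4_eq_3_gt_2 by blast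
  define A where "A = {0..<int p}"
  define L where "L k = (of_int (Legendre k (int p)) :: 'a)" for k
  define k0 where "k0 = (- t) mod int p"
  define F where "F k = legendre_vector p r c d k * legendre_vector p z a b (k + t)" for k
  define f where "f k = (c + d * L k) * (a + b * L (k + t))" for k
  have zero_in_A: "0 \<in> A" and k0_in_A: "k0 \<in> A" and "k0 \<noteq> 0"
    using \<open>2 < p\<close> assms(3) by (auto simp: A_def k0_def mod_eq_0_iff_dvd)
  have "\<not> int p dvd k0"
    using \<open>k0 \<noteq> 0\<close> k0_in_A zdvd_imp_le[of "int p" k0] by (auto simp: A_def)
  have k0_dvd: "int p dvd k0 + t"
    by (simp add: k0_def mod_eq_0_iff_dvd [symmetric] mod_add_left_eq)
  have L_k0: "L k0 = - \<chi>"
    using Legendre_mult[OF assms(1) \<open>2 < p\<close>, of "-1" t] Legendre_minus_one_mod_4_eq_3[OF assms(1,2)]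
    by (simp add: L_def \<chi>_def k0_def Legendre_mod)
  have split_A: "sum h A = h 0 + h k0 + sum h (A - {0, k0})" for h :: "int \<Rightarrow> 'a"
  proof -
    have A_eq: "A = insert 0 (insert k0 (A - {0, k0}))" using zero_in_A k0_in_A by auto
    show ?thesis using \<open>k0 \<noteq> 0\<close> by (subst A_eq) (simp add: A_def add.assoc)
  qed
  have "F k = f k" if "k \<in> A - {0, k0}" for k
  proof -
    have "\<not> int p dvd k" using that zdvd_imp_le[of "int p" k] by (force simp: A_def)
    moreover have "\<not> int p dvd k + t"
    proof
      assume "int p dvd k + t"
      then have "k mod int p = k0" by (simp add: k0_def mod_eq_dvd_iff)
      with that show False by (simp add: A_def)
    qed
    ultimately show ?thesis by (simp add: F_def f_def legendre_vector_def L_def)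
  qed
  then have "sum F (A - {0, k0}) = sum f (A - {0, k0})" by (rule sum.cong[OF refl])
  then have "sum F A = F 0 + F k0 + (sum f A - f 0 - f k0)"
    using split_A[of F] split_A[of f] by simp
  moreover have "sum f A = of_nat p * c * a - d * b"
  proof -
    have "sum f A = (\<Sum>k\<in>A. c * a + c * b * L (k + t) + d * a * L k + d * b * (L k * L (k + t)))"
      by (intro sum.cong refl) (simp add: f_def algebra_simps)
    also have "\<dots> = of_nat p * c * a - d * b"
      using sum_Legendre_eq_0[OF assms(1,2)] sum_Legendre_shifted_eq_0[OF assms(1,2), of t]
        sum_Legendre_autocorrelation[OF assms(1-3)]
      by (simp add: sum.distrib L_def A_def flip: sum_distrib_left of_int_sum of_int_mult)
    finally show ?thesis .
  qed
  moreover have "F 0 = r * (a + b * \<chi>)" "f 0 = c * (a + b * \<chi>)"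
    using assms(3) Legendre_eq_0_iff[of 0 "int p"]
    by (simp_all add: F_def f_def legendre_vector_def L_def \<chi>_def)
  moreover have "F k0 = (c - d * \<chi>) * z" "f k0 = (c - d * \<chi>) * a"
    using \<open>\<not> int p dvd k0\<close> k0_dvd L_k0 Legendre_eq_0_iff[of "k0 + t" "int p"]
    by (simp_all add: F_def f_def legendre_vector_def L_def)
  ultimately have "sum F A = of_nat p * c * a - d * b + (r - c) * (a + b * \<chi>) + (z - a) * (c - d * \<chi>)"
    by (simp add: algebra_simps)
  then show ?thesis by (simp add: F_def A_def)
qed

lemma cnj_legendre_vector:
  "cnj (legendre_vector p z a b k) = legendre_vector p (cnj z) (cnj a) (cnj b) k"
  by (simp add: legendre_vector_def)

lemma legendre_vector_phase:
  fixes x :: "'a::field_char_0"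
  assumes "x \<noteq> 0" "\<not> int p dvd k"
  shows "legendre_vector p z ((x - 1 / x) / 2) ((x + 1 / x) / 2) k =
    (if Legendre k (int p) = 1 then x else - 1 / x)"
  using assms Legendre_cases[of k "int p"] Legendre_eq_0_iff[of k "int p"]
  by (auto simp: legendre_vector_def field_simps)

lemma legendre_vector_overlap:
  fixes x :: complex and v :: "nat \<Rightarrow> complex"
  assumes "prime p" "p mod 4 = 3" "cmod x = 1" "\<not> int p dvd t"
    and "v 0 = s" "cnj s = - s"
    and v_Legendre: "\<And>k. 0 < k \<Longrightarrow> k < p \<Longrightarrow> v k = (if Legendre (int k) (int p) = 1 then x else - 1 / x)"
  defines "\<alpha> \<equiv> (x - 1 / x) / 2" and "\<beta> \<equiv> (x + 1 / x) / 2"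
  shows "(\<Sum>k<p. cnj (v k) * v (nat ((int k + t) mod int p))) =
    - of_nat p * \<alpha>\<^sup>2 - \<beta>\<^sup>2 + 2 * (\<alpha> - s) * (\<alpha> + \<beta> * of_int (Legendre t (int p)))"
proof -
  have "x \<noteq> 0" using assms(3) by auto
  have "cnj x = 1 / x"
    using complex_div_cnj[of 1 x] assms(3) by simp
  then have cnj_\<alpha>: "cnj \<alpha> = - \<alpha>" and cnj_\<beta>: "cnj \<beta> = \<beta>"
    by (simp_all add: \<alpha>_def \<beta>_def field_simps)
  define V where "V = legendre_vector p s \<alpha> \<beta>"
  have v_eq: "v (nat (a mod int p)) = V a" for a
  proof (cases "int p dvd a")
    case True
    then show ?thesis by (simp add: V_def legendre_vector_def \<open>v 0 = s\<close>)
  next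
    case False
    define k where "k = nat (a mod int p)"
    have "0 < p" using assms(1) prime_gt_0_nat by blast
    then have k: "int k = a mod int p" by (simp add: k_def)
    moreover have "a mod int p \<noteq> 0" "a mod int p < int p"
      using False \<open>0 < p\<close> by (simp_all add: mod_eq_0_iff_dvd)
    ultimately have "0 < k" "k < p" by linarith+
    with k show ?thesis
      using legendre_vector_phase[OF \<open>x \<noteq> 0\<close> False] v_Legendre[of k]
      by (simp add: V_def \<alpha>_def \<beta>_def k_def Legendre_mod)
  qed
  have "(\<Sum>k<p. cnj (v k) * v (nat ((int k + t) mod int p))) =
      (\<Sum>k<p. cnj (V (int k)) * V (int k + t))"
    by (intro sum.cong refl) (simp flip: v_eq)
  also have "\<dots> = (\<Sum>k\<in>int ` {..<p}. legendre_vector p (- s) (- \<alpha>) \<beta> k * V (k + t))"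
    by (simp add: sum.reindex cnj_legendre_vector V_def \<open>cnj s = - s\<close> cnj_\<alpha> cnj_\<beta>)
  also have "\<dots> = (\<Sum>k\<in>{0..<int p}. legendre_vector p (- s) (- \<alpha>) \<beta> k * V (k + t))"
    by (simp add: lessThan_atLeast0 image_int_atLeastLessThan)
  also have "\<dots> = - of_nat p * \<alpha>\<^sup>2 - \<beta>\<^sup>2 + 2 * (\<alpha> - s) * (\<alpha> + \<beta> * of_int (Legendre t (int p)))"
    unfolding V_def sum_legendre_vector_correlation[OF assms(1,2,4)]
    by (simp add: algebra_simps power2_eq_square)
  finally show ?thesis .
qed

lemma rhs3_rhs7_eq:
  fixes x s :: complex
  assumes "x \<noteq> 0"
  defines "\<alpha> \<equiv> (x - 1 / x) / 2" and "\<beta> \<equiv> (x + 1 / x) / 2"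
  shows "rhs3 d s x = - of_nat d * \<alpha>\<^sup>2 - \<beta>\<^sup>2 + 2 * (\<alpha> - s) * (\<alpha> - \<beta>)"
    and "rhs7 d s x = - of_nat d * \<alpha>\<^sup>2 - \<beta>\<^sup>2 + 2 * (\<alpha> - s) * (\<alpha> + \<beta>)"
    and "rhs3 d s (- 1 / x) = - of_nat d * \<alpha>\<^sup>2 - \<beta>\<^sup>2 + 2 * (\<alpha> - s) * (\<alpha> + \<beta>)"
    and "rhs7 d s (- 1 / x) = - of_nat d * \<alpha>\<^sup>2 - \<beta>\<^sup>2 + 2 * (\<alpha> - s) * (\<alpha> - \<beta>)"
  using assms by (simp_all add: rhs3_def rhs7_def field_simps power2_eq_square)

theorem lemma1:
  fixes p :: nat and j :: int and x1 :: complex and v :: "nat \<Rightarrow> complex"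
  assumes "prime p" and "p mod 4 = 3"
    and "cmod x1 = 1"
    and v0: "v 0 = csqrt (complex_of_real (-2 - sqrt (real p + 1)))"
    and vabs: "\<And>k. 0 < k \<Longrightarrow> k < p \<Longrightarrow> cmod (v k) = 1"
    and vsym: "\<And>k. k < p \<Longrightarrow> v ((p - k) mod p) = - cnj (v k)"
    and vleg: "\<And>k. 0 < k \<Longrightarrow> k < p \<Longrightarrow>
               v k = (if Legendre (int k) (int p) = 1 then x1 else - 1 / x1)"
  shows "let S = (\<Sum>k<p. cnj (v k) * v (nat ((int k + 2 * j) mod int p)));
             s = csqrt (complex_of_real (-2 - sqrt (real p + 1)))
         in (Legendre j (int p) = 1 \<and> p mod 8 = 3 \<longrightarrow> S = rhs3 p s x1)
          \<and> (Legendre j (int p) = 1 \<and> p mod 8 = 7 \<longrightarrow> S = rhs7 p s x1)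
          \<and> (Legendre j (int p) = -1 \<and> p mod 8 = 3 \<longrightarrow> S = rhs3 p s (- 1 / x1))
          \<and> (Legendre j (int p) = -1 \<and> p mod 8 = 7 \<longrightarrow> S = rhs7 p s (- 1 / x1))"
proof -
  define s where "s = csqrt (complex_of_real (-2 - sqrt (real p + 1)))"
  define \<alpha> where "\<alpha> = (x1 - 1 / x1) / 2"
  define \<beta> where "\<beta> = (x1 + 1 / x1) / 2"
  have "2 < p" using assms(1,2) by (rule prime_mod_4_eq_3_gt_2)
  have "v 0 = - cnj (v 0)" using vsym[of 0] \<open>2 < p\<close> by simp
  then have "cnj s = - s"
    unfolding s_def v0[symmetric] by (metis complex_cnj_cnj complex_cnj_minus)
  have overlap: "(\<Sum>k<p. cnj (v k) * v (nat ((int k + 2 * j) mod int p))) =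
      - of_nat p * \<alpha>\<^sup>2 - \<beta>\<^sup>2 + 2 * (\<alpha> - s) *
        (\<alpha> + \<beta> * ((if p mod 8 = 7 then 1 else -1) * of_int (Legendre j (int p))))"
    if "Legendre j (int p) \<noteq> 0"
  proof -
    have "\<not> int p dvd 2 * j"
      using that assms(1) \<open>2 < p\<close> zdvd_imp_le[of "int p" 2]
      by (auto simp: Legendre_eq_0_iff prime_dvd_mult_iff)
    moreover have "Legendre (2 * j) (int p) = (if p mod 8 = 7 then 1 else -1) * Legendre j (int p)"
      using Legendre_mult[OF assms(1) \<open>2 < p\<close>] Legendre_two[OF assms(1) \<open>2 < p\<close>]
        \<open>p mod 4 = 3\<close> mod_mod_cancel[of 4 8 p] by auto
    ultimately show ?thesis
      using legendre_vector_overlap[OF assms(1-3) _ v0[folded s_def] \<open>cnj s = - s\<close> vleg]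
      by (simp add: \<alpha>_def \<beta>_def)
  qed
  have "x1 \<noteq> 0" using assms(3) by auto
  note rhs = rhs3_rhs7_eq[OF this, of p s, folded \<alpha>_def \<beta>_def]
  show ?thesis
    unfolding Let_def s_def[symmetric]
    by (intro conjI impI; elim conjE; simp only: rhs; simp add: overlap)
qed

end
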